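(* Let $l\ge1$ and let $A$ be a real $l\times l$ matrix. If $\det(I+\overline IA)\ge0$ for every $l\times l$ diagonal matrix $\overline I$ whose diagonal entries are each $1$ or $-1$, then $|\det A|\le1$.
   Context: $I$ denotes the $l\times l$ identity matrix. *)

theory Defs
  imports "HOL-Analysis.Analysis"
begin

end

theory Submission
  imports Defs
begin

text \<open>Expanding the determinant multilinearly in the rows shows that, summed over all sign
  vectors \<open>s\<close>, the determinants \<open>det (I + diag s * A)\<close> add up to \<open>2^l\<close>, while the same sum
  weighted by \<open>\<Prod>i. s i\<close> equals \<open>2^l * det A\<close>: in each row the two choices of sign cancel
  either the entries of \<open>A\<close> or those of \<open>I\<close>. If all these determinants are nonnegative,
  the triangle inequality gives \<open>2^l * \<bar>det A\<bar> \<le> 2^l\<close>.\<close>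

definition diag_mat :: "('n \<Rightarrow> 'a::zero) \<Rightarrow> 'a ^ 'n ^ 'n" where
  "diag_mat s = (\<chi> i j. if i = j then s i else 0)"

definition sign_vectors :: "('n \<Rightarrow> 'a::comm_ring_1) set" where
  "sign_vectors = PiE UNIV (\<lambda>_. {1, -1})"

lemma mem_sign_vectors_iff: "s \<in> sign_vectors \<longleftrightarrow> (\<forall>i. s i = 1 \<or> s i = -1)"
  by (auto simp: sign_vectors_def PiE_def Pi_def)

lemma mat_1_plus_diag_mat_mult_nth:
  fixes A :: "'a::comm_ring_1 ^ 'n ^ 'n"
  shows "(mat 1 + diag_mat s ** A) $ i $ j = (if i = j then 1 else 0) + s i * A $ i $ j"
proof -
  have "(\<Sum>k\<in>UNIV. (if i = k then s i else 0) * A $ k $ j) = s i * A $ i $ j"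
    by (simp add: if_distrib[of "\<lambda>x. x * _"] cong: if_cong)
  then show ?thesis
    by (simp add: matrix_matrix_mult_def mat_def diag_mat_def)
qed

text \<open>Since the \<open>i\<close>-th row of \<open>I + diag s * A\<close> depends on \<open>s i\<close> only, a product weight
  lets the sum over sign vectors be taken row by row inside the Leibniz formula.\<close>

lemma sum_sign_vectors_weighted_det:
  fixes A :: "'a::comm_ring_1 ^ 'n ^ 'n" and w :: "'a \<Rightarrow> 'a"
  shows "(\<Sum>s\<in>sign_vectors. (\<Prod>i\<in>UNIV. w (s i)) * det (mat 1 + diag_mat s ** A))
       = (\<Sum>p | p permutes UNIV. of_int (sign p) *
            (\<Prod>i\<in>UNIV. \<Sum>t\<in>{1,-1}. w t * ((if i = p i then 1 else 0) + t * A $ i $ p i)))"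
proof -
  have "(\<Sum>s\<in>sign_vectors. (\<Prod>i\<in>UNIV. w (s i)) * det (mat 1 + diag_mat s ** A))
      = (\<Sum>s\<in>sign_vectors. \<Sum>p | p permutes UNIV. of_int (sign p) *
            (\<Prod>i\<in>UNIV. w (s i) * ((if i = p i then 1 else 0) + s i * A $ i $ p i)))"
    unfolding det_def mat_1_plus_diag_mat_mult_nth
    by (simp add: sum_distrib_left prod.distrib mult.left_commute)
  also have "\<dots> = (\<Sum>p | p permutes UNIV. \<Sum>s\<in>sign_vectors. of_int (sign p) *
            (\<Prod>i\<in>UNIV. w (s i) * ((if i = p i then 1 else 0) + s i * A $ i $ p i)))"
    by (rule sum.swap)
  also have "\<dots> = (\<Sum>p | p permutes UNIV. of_int (sign p) *
            (\<Prod>i\<in>UNIV. \<Sum>t\<in>{1,-1}. w t * ((if i = p i then 1 else 0) + t * A $ i $ p i)))"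
    unfolding sign_vectors_def by (subst prod_sum_PiE) (simp_all add: sum_distrib_left)
  finally show ?thesis .
qed

lemma sum_sign_vectors_det:
  fixes A :: "'a::{comm_ring_1, ring_char_0} ^ 'n ^ 'n"
  shows "(\<Sum>s\<in>sign_vectors. det (mat 1 + diag_mat s ** A)) = 2 ^ CARD('n)"
proof -
  have "(\<Sum>s\<in>sign_vectors. det (mat 1 + diag_mat s ** A))
      = (\<Sum>p | p permutes UNIV. of_int (sign p) *
            (\<Prod>i\<in>UNIV. \<Sum>t\<in>{1,-1}. 1 * ((if i = p i then 1 else 0) + t * A $ i $ p i)))"
    using sum_sign_vectors_weighted_det[of "\<lambda>_. 1" A] by simp
  also have "\<dots> = (\<Sum>p | p permutes UNIV. of_int (sign p) *
            (\<Prod>i\<in>UNIV. 2 * (mat 1 :: 'a ^ 'n ^ 'n) $ i $ p i))"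
    by (intro sum.cong refl arg_cong2[where f = "(*)"] prod.cong) (auto simp: mat_def)
  also have "\<dots> = 2 ^ CARD('n) * det (mat 1 :: 'a ^ 'n ^ 'n)"
    by (simp add: det_def prod.distrib sum_distrib_left mult.left_commute)
  finally show ?thesis by simp
qed

lemma sum_sign_vectors_signed_det:
  fixes A :: "'a::{comm_ring_1, ring_char_0} ^ 'n ^ 'n"
  shows "(\<Sum>s\<in>sign_vectors. (\<Prod>i\<in>UNIV. s i) * det (mat 1 + diag_mat s ** A))
       = 2 ^ CARD('n) * det A"
proof -
  have "(\<Sum>s\<in>sign_vectors. (\<Prod>i\<in>UNIV. s i) * det (mat 1 + diag_mat s ** A))
      = (\<Sum>p | p permutes UNIV. of_int (sign p) *
            (\<Prod>i\<in>UNIV. \<Sum>t\<in>{1,-1}. t * ((if i = p i then 1 else 0) + t * A $ i $ p i)))"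
    using sum_sign_vectors_weighted_det[of "\<lambda>t. t" A] by simp
  also have "\<dots> = (\<Sum>p | p permutes UNIV. of_int (sign p) * (\<Prod>i\<in>UNIV. 2 * A $ i $ p i))"
    by (intro sum.cong refl arg_cong2[where f = "(*)"] prod.cong) (auto simp: algebra_simps)
  also have "\<dots> = 2 ^ CARD('n) * det A"
    by (simp add: det_def prod.distrib sum_distrib_left mult.left_commute)
  finally show ?thesis .
qed

lemma abs_prod_sign_vector:
  fixes s :: "'n::finite \<Rightarrow> 'a::linordered_idom"
  assumes "s \<in> sign_vectors"
  shows "\<bar>\<Prod>i\<in>UNIV. s i\<bar> = 1"
proof -
  have "\<bar>s i\<bar> = 1" for i
    using assms by (cases "s i = 1") (auto simp: mem_sign_vectors_iff)
  then show ?thesis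
    by (simp add: abs_prod)
qed

theorem corollary2p1:
  fixes A :: "real ^ 'n ^ 'n"
  assumes "\<forall>s :: 'n \<Rightarrow> real. (\<forall>i. s i = 1 \<or> s i = -1) \<longrightarrow>
             det (mat 1 + (\<chi> i j. if i = j then s i else 0) ** A) \<ge> 0"
  shows "\<bar>det A\<bar> \<le> 1"
proof -
  let ?f = "\<lambda>s. det (mat 1 + diag_mat s ** A)"
  have nonneg: "?f s \<ge> 0" if "s \<in> sign_vectors" for s
    using assms that by (simp add: mem_sign_vectors_iff diag_mat_def)
  have "2 ^ CARD('n) * \<bar>det A\<bar> = \<bar>\<Sum>s\<in>sign_vectors. (\<Prod>i\<in>UNIV. s i) * ?f s\<bar>"
    by (simp add: sum_sign_vectors_signed_det abs_mult)
  also have "\<dots> \<le> (\<Sum>s\<in>sign_vectors. \<bar>(\<Prod>i\<in>UNIV. s i) * ?f s\<bar>)"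
    by (rule sum_abs)
  also have "\<dots> = (\<Sum>s\<in>sign_vectors. ?f s)"
    by (intro sum.cong refl) (simp add: abs_mult abs_prod_sign_vector nonneg)
  also have "\<dots> = 2 ^ CARD('n) * 1"
    by (simp add: sum_sign_vectors_det)
  finally show ?thesis by simp
qed

end
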